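(* Let $u_1,\dots,u_n\in\mathbb{R}^d$, $c_1,\dots,c_m\in\mathbb{R}^n_{\ge0}$, budgets $b_1,\dots,b_m$, and $\varepsilon>0$ with $b_j\ge\frac{d\|c_j\|_\infty}{\varepsilon}$ for all $1\le j\le m$. Let $x\in[0,1]^n$ be an optimal solution of the convex program: minimize $\operatorname{tr}((\sum_{i=1}^n x(i)u_iu_i^\top)^{-1})$ subject to $\langle c_j,x\rangle\le b_j$ ($1\le j\le m$), $0\le x(i)\le1$ ($1\le i\le n$). Let $X=\sum_i x(i)u_iu_i^\top$ (nonsingular) and $v_i=X^{-1/2}u_i$. Then for each $1\le i\le n$ with $0<x(i)<1$, \[ \langle X^{-1},v_iv_i^\top\rangle\le\frac{\varepsilon}{d}\operatorname{tr}(X^{-1}). \]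
   Context: $\langle M,N\rangle=\operatorname{tr}(MN)$ for symmetric matrices. *)

theory Defs
  imports "HOL-Analysis.Analysis"
begin

definition outer :: "real^'d \<Rightarrow> real^'d^'d" where
  "outer u = (\<chi> i j. u$i * u$j)"

definition frob :: "real^'d^'d \<Rightarrow> real^'d^'d \<Rightarrow> real" where
  "frob M N = trace (M ** N)"

definition design :: "real^'n \<Rightarrow> ('n \<Rightarrow> real^'d) \<Rightarrow> real^'d^'d" where
  "design y u = (\<Sum>i\<in>UNIV. y$i *\<^sub>R outer (u i))"

definition feasible :: "nat \<Rightarrow> (nat \<Rightarrow> real^'n) \<Rightarrow> (nat \<Rightarrow> real) \<Rightarrow> real^'n \<Rightarrow> bool" where
  "feasible m c b y \<longleftrightarrow> (\<forall>j<m. c j \<bullet> y \<le> b j) \<and> (\<forall>i. 0 \<le> y$i \<and> y$i \<le> 1)"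

text \<open>Optimal solution of: minimize tr((design y u)^-1) subject to feasibility; the
objective is +infinity (outside its domain) when design y u is singular.\<close>
definition optimal :: "('n \<Rightarrow> real^'d) \<Rightarrow> nat \<Rightarrow> (nat \<Rightarrow> real^'n) \<Rightarrow> (nat \<Rightarrow> real) \<Rightarrow> real^'n \<Rightarrow> bool" where
  "optimal u m c b x \<longleftrightarrow> feasible m c b x \<and> invertible (design x u) \<and>
     (\<forall>y. feasible m c b y \<and> invertible (design y u) \<longrightarrow>
        trace (matrix_inv (design x u)) \<le> trace (matrix_inv (design y u)))"

definition psd :: "real^'d^'d \<Rightarrow> bool" where
  "psd A \<longleftrightarrow> transpose A = A \<and> (\<forall>v. 0 \<le> v \<bullet> (A *v v))"

definition msqrt :: "real^'d^'d \<Rightarrow> real^'d^'d" where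
  "msqrt A = (THE S. psd S \<and> S ** S = A)"

end

theory Submission
  imports Defs
begin

text \<open>Moving a little mass towards coordinate i, y = (1 - t) x + t (d / eps) e_i, respects the
  budgets (this is where b_j >= d ||c_j||_inf / eps enters) and the box (since x(i) < 1). The design
  of y is the rank-one update (1 - t) X + t (d / eps) u_i u_i^T, inverted explicitly by the
  Sherman-Morrison formula; comparing traces with the optimum and letting t tend to 0 gives
  (d / eps) ||X^-1 u_i||^2 <= tr X^-1. Finally <X^-1, v_i v_i^T> = ||X^-1 u_i||^2, since X^-1/2 is a
  symmetric square root of X^-1. The principal square root exists and is unique by the spectral
  theorem for symmetric matrices, which follows by maximising the Rayleigh quotient.\<close>

lemma matrix_vector_mult_sum_left: "sum g F *v (v::real^'n) = (\<Sum>f\<in>F. g f *v v)"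
  by (induct F rule: infinite_finite_induct) (auto simp: matrix_vector_mult_add_rdistrib)

lemma matrix_vector_mult_sum_right: "(A::real^'n^'m) *v sum g F = (\<Sum>f\<in>F. A *v g f)"
  by (induct F rule: infinite_finite_induct) (auto simp: matrix_vector_right_distrib)

lemma scaleR_matrix_vector_assoc: "(c *\<^sub>R A) *v (v::real^'n) = c *\<^sub>R (A *v v)"
  by (simp add: vec_eq_iff matrix_vector_mult_def sum_distrib_left mult.assoc)

lemma transpose_sum: "transpose (sum g F) = (\<Sum>f\<in>F. transpose (g f :: real^'n^'m))"
  by (induct F rule: infinite_finite_induct) (auto simp: transpose_def vec_eq_iff)

lemma inner_matrix_vector_symmetric:
  "transpose A = A \<Longrightarrow> x \<bullet> (A *v y) = (A *v x) \<bullet> (y::real^'n)"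
  by (metis dot_lmul_matrix transpose_matrix_vector)

lemma outer_matrix_vector_mult: "outer f *v v = (f \<bullet> v) *\<^sub>R f"
  by (simp add: outer_def vec_eq_iff matrix_vector_mult_def inner_vec_def sum_distrib_left mult_ac)

lemma transpose_outer: "transpose (outer f) = outer f"
  by (simp add: outer_def transpose_def vec_eq_iff mult.commute)

lemma trace_outer: "trace (outer w) = w \<bullet> w"
  by (simp add: outer_def trace_def inner_vec_def)

lemma trace_scaleR: "trace (c *\<^sub>R (A::real^'n^'n)) = c * trace A"
  by (simp add: trace_def sum_distrib_left)

lemma frob_outer: "frob P (outer v) = v \<bullet> (P *v v)"
  by (simp add: frob_def trace_def outer_def matrix_matrix_mult_def inner_vec_def
      matrix_vector_mult_def sum_distrib_left mult_ac)

lemma matrix_inv_right: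
  fixes A :: "'a::semiring_1^'n^'m"
  assumes "invertible A"
  shows "A ** matrix_inv A = mat 1"
  using someI_ex[of "\<lambda>A'. A ** A' = mat 1 \<and> A' ** A = mat 1"] assms
  by (simp add: invertible_def matrix_inv_def)

lemma matrix_inv_unique:
  fixes A B :: "'a::field^'n^'n"
  assumes "A ** B = mat 1"
  shows "matrix_inv A = B"
proof -
  have "invertible A" using assms invertible_right_inverse by blast
  then have "matrix_inv A ** A = mat 1"
    using matrix_inv_right matrix_left_right_inverse by blast
  then have "matrix_inv A = matrix_inv A ** (A ** B)" using assms by simp
  also have "\<dots> = B" by (simp add: matrix_mul_assoc \<open>matrix_inv A ** A = mat 1\<close>)
  finally show ?thesis .
qed

lemma symmetric_right_inverse:
  fixes A B :: "real^'n^'n"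
  assumes "transpose A = A" "A ** B = mat 1"
  shows "transpose B = B"
proof -
  have "transpose B ** A = mat 1"
    using arg_cong[OF assms(2), of transpose] assms(1) by (simp add: matrix_transpose_mul)
  have "transpose B = transpose B ** (A ** B)" by (simp add: assms(2))
  also have "\<dots> = (transpose B ** A) ** B" by (rule matrix_mul_assoc)
  also have "\<dots> = B" by (simp add: \<open>transpose B ** A = mat 1\<close>)
  finally show ?thesis .
qed

lemma psd_right_inverse:
  fixes A B :: "real^'n^'n"
  assumes "psd A" "A ** B = mat 1"
  shows "psd B"
proof -
  have A_sym: "transpose A = A" and A_pos: "\<And>v. 0 \<le> v \<bullet> (A *v v)"
    using assms(1) by (auto simp: psd_def)
  have "v \<bullet> (B *v v) = (B *v v) \<bullet> (A *v (B *v v))" for v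
    using inner_matrix_vector_symmetric[OF A_sym, of "B *v v" "B *v v"] assms(2)
    by (simp add: matrix_vector_mul_assoc inner_commute)
  then show ?thesis
    using symmetric_right_inverse[OF A_sym assms(2)] A_pos by (simp add: psd_def)
qed

lemma le_of_le_add_linear_near_zero:
  fixes a b k t\<^sub>0 :: real
  assumes "0 < t\<^sub>0" and le: "\<And>t. 0 < t \<Longrightarrow> t \<le> t\<^sub>0 \<Longrightarrow> a \<le> b + t * k"
  shows "a \<le> b"
proof -
  have "((\<lambda>t. b + t * k) \<longlongrightarrow> b) (at_right 0)"
    by (auto intro!: tendsto_eq_intros)
  moreover have "eventually (\<lambda>t. a \<le> b + t * k) (at_right 0)"
    unfolding eventually_at_right_field using assms by (auto intro!: exI[of _ t\<^sub>0])
  ultimately show ?thesis by (rule tendsto_lowerbound) simp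
qed

lemma rayleigh_quotient_max_on_subspace:
  fixes A :: "real^'n^'n"
  assumes V: "subspace V" and ne: "V \<noteq> {0}"
  obtains e where "e \<in> V" "norm e = 1" "\<And>z. z \<in> V \<Longrightarrow> z \<bullet> (A *v z) \<le> (e \<bullet> (A *v e)) * (z \<bullet> z)"
proof -
  let ?S = "V \<inter> sphere 0 1"
  have "compact ?S" using closed_subspace[OF V] compact_sphere by (rule closed_Int_compact)
  obtain y where "y \<in> V" "y \<noteq> 0" using ne V subspace_0 by blast
  then have "y /\<^sub>R norm y \<in> ?S" using V subspace_scale by auto
  then have "?S \<noteq> {}" by blast
  have "continuous_on ?S (\<lambda>y. y \<bullet> (A *v y))"
    by (intro continuous_on_inner continuous_on_id linear_continuous_on
        linear_conv_bounded_linear[THEN iffD1] matrix_vector_mul_linear)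
  with continuous_attains_sup[OF \<open>compact ?S\<close> \<open>?S \<noteq> {}\<close>]
  obtain e where e: "e \<in> ?S" and max: "\<And>z. z \<in> ?S \<Longrightarrow> z \<bullet> (A *v z) \<le> e \<bullet> (A *v e)"
    by blast
  have "z \<bullet> (A *v z) \<le> (e \<bullet> (A *v e)) * (z \<bullet> z)" if "z \<in> V" for z
  proof (cases "z = 0")
    case False
    then have "z /\<^sub>R norm z \<in> ?S" using that V subspace_scale by auto
    from max[OF this] have "(z \<bullet> (A *v z)) / (norm z)^2 \<le> e \<bullet> (A *v e)"
      by (simp add: matrix_vector_mult_scaleR power2_eq_square divide_inverse mult_ac)
    then show ?thesis using False by (simp add: divide_le_eq dot_square_norm mult.commute)
  qed simp
  with e show thesis using that by auto
qed

text \<open>A maximiser of the Rayleigh quotient on an invariant subspace is an eigenvector: moving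
  from e in the direction of the residual w = A e - l e would otherwise increase the quotient
  to first order.\<close>
lemma symmetric_eigenvector_in_invariant_subspace:
  fixes A :: "real^'n^'n"
  assumes sym: "transpose A = A" and V: "subspace V" and inv: "\<And>y. y \<in> V \<Longrightarrow> A *v y \<in> V"
    and ne: "V \<noteq> {0}"
  obtains e where "e \<in> V" "norm e = 1" "A *v e = (e \<bullet> (A *v e)) *\<^sub>R e"
proof -
  obtain e where eV: "e \<in> V" and e1: "norm e = 1"
    and max: "\<And>z. z \<in> V \<Longrightarrow> z \<bullet> (A *v z) \<le> (e \<bullet> (A *v e)) * (z \<bullet> z)"
    using rayleigh_quotient_max_on_subspace[OF V ne] by blast
  define l where "l = e \<bullet> (A *v e)"
  define w where "w = A *v e - l *\<^sub>R e"
  have wV: "w \<in> V" unfolding w_def using inv eV V by (simp add: subspace_diff subspace_scale)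
  have "2 * (w \<bullet> w) \<le> 0 + t * (l * (w \<bullet> w) - w \<bullet> (A *v w))" if "0 < t" "t \<le> 1" for t
  proof -
    have ee: "e \<bullet> e = 1" using e1 by (simp add: dot_square_norm)
    have eAw: "e \<bullet> (A *v w) = w \<bullet> (A *v e)"
      using inner_matrix_vector_symmetric[OF sym, of e w] by (simp add: inner_commute)
    have we: "w \<bullet> (A *v e) - l * (w \<bullet> e) = w \<bullet> w"
      by (simp add: w_def inner_diff_right inner_diff_left algebra_simps)
    have "e + t *\<^sub>R w \<in> V" using eV wV V by (simp add: subspace_add subspace_scale)
    from max[OF this]
    have "l + 2*t*(w \<bullet> (A *v e)) + t^2*(w \<bullet> (A *v w)) \<le> l * (1 + 2*t*(w \<bullet> e) + t^2*(w \<bullet> w))"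
      by (simp add: l_def[symmetric] eAw ee inner_add_left inner_add_right matrix_vector_right_distrib
          matrix_vector_mult_scaleR power2_eq_square algebra_simps inner_commute)
    then have "t * (2 * (w \<bullet> w)) \<le> t * (t * (l * (w \<bullet> w) - w \<bullet> (A *v w)))"
      using we by (simp add: power2_eq_square algebra_simps)
    then show ?thesis using \<open>0 < t\<close> by simp
  qed
  then have "2 * (w \<bullet> w) \<le> 0" by (rule le_of_le_add_linear_near_zero[OF zero_less_one])
  then have "w \<bullet> w = 0" using inner_ge_zero[of w] by linarith
  then have "A *v e = l *\<^sub>R e" by (simp add: w_def)
  then show thesis using that eV e1 l_def by blast
qed

definition orthonormal_eigenvectors :: "real^'n^'n \<Rightarrow> (real^'n) set \<Rightarrow> bool" where
  "orthonormal_eigenvectors A F \<longleftrightarrow> finite F \<and> pairwise orthogonal F \<and>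
     (\<forall>f\<in>F. norm f = 1 \<and> A *v f = (f \<bullet> (A *v f)) *\<^sub>R f)"

lemma orthonormal_eigenvectors_inner:
  "orthonormal_eigenvectors A F \<Longrightarrow> f \<in> F \<Longrightarrow> g \<in> F \<Longrightarrow> f \<bullet> g = (if f = g then 1 else 0)"
  unfolding orthonormal_eigenvectors_def pairwise_def orthogonal_def by (auto simp: dot_square_norm)

lemma orthonormal_eigenvectors_coeff:
  assumes "orthonormal_eigenvectors A F" "g \<in> F"
  shows "g \<bullet> (\<Sum>f\<in>F. c f *\<^sub>R f) = c g"
proof -
  have "g \<bullet> (\<Sum>f\<in>F. c f *\<^sub>R f) = (\<Sum>f\<in>F. if f = g then c f else 0)"
    unfolding inner_sum_right
    by (intro sum.cong) (auto simp: orthonormal_eigenvectors_inner[OF assms(1) assms(2)])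
  also have "\<dots> = c g" using assms by (simp add: orthonormal_eigenvectors_def)
  finally show ?thesis .
qed

lemma orthonormal_eigenvectors_card:
  fixes A :: "real^'n^'n"
  assumes "orthonormal_eigenvectors A F"
  shows "card F \<le> CARD('n)"
proof -
  have "independent F"
    using assms pairwise_orthogonal_independent by (force simp: orthonormal_eigenvectors_def)
  then show ?thesis using independent_bound by fastforce
qed

lemma orthogonal_complement_invariant:
  fixes A :: "real^'n^'n"
  assumes "transpose A = A" "orthonormal_eigenvectors A F" "\<forall>f\<in>F. f \<bullet> y = 0"
  shows "\<forall>f\<in>F. f \<bullet> (A *v y) = 0"
proof
  fix f assume f: "f \<in> F"
  have "f \<bullet> (A *v y) = (A *v f) \<bullet> y" by (rule inner_matrix_vector_symmetric[OF assms(1)])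
  also have "\<dots> = (f \<bullet> (A *v f)) * (f \<bullet> y)"
    using assms(2) f unfolding orthonormal_eigenvectors_def by (metis inner_scaleR_left)
  finally show "f \<bullet> (A *v y) = 0" using assms(3) f by simp
qed

text \<open>A maximal orthonormal family of eigenvectors is a basis: otherwise its orthogonal
  complement, which is invariant, would contain a further eigenvector.\<close>
lemma symmetric_orthonormal_eigenbasis:
  fixes A :: "real^'n^'n"
  assumes sym: "transpose A = A"
  obtains F where "orthonormal_eigenvectors A F" "\<And>x. x = (\<Sum>f\<in>F. (f \<bullet> x) *\<^sub>R f)"
proof -
  have "orthonormal_eigenvectors A {}" by (simp add: orthonormal_eigenvectors_def)
  moreover have "\<forall>G. orthonormal_eigenvectors A G \<longrightarrow> card G < Suc CARD('n)"
    using orthonormal_eigenvectors_card[of A] by (simp add: less_Suc_eq_le)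
  ultimately obtain F where F: "orthonormal_eigenvectors A F"
    and maximal: "\<And>G. orthonormal_eigenvectors A G \<Longrightarrow> card G \<le> card F"
    using ex_has_greatest_nat[of "orthonormal_eigenvectors A" "{}" card] by blast
  define V where "V = {y. \<forall>f\<in>F. f \<bullet> y = 0}"
  have V: "subspace V" unfolding V_def subspace_def by (auto simp: inner_add_right)
  have "V = {0}"
  proof (rule ccontr)
    assume "V \<noteq> {0}"
    moreover have "A *v y \<in> V" if "y \<in> V" for y
      using orthogonal_complement_invariant[OF sym F] that by (simp add: V_def)
    ultimately obtain e where e: "e \<in> V" "norm e = 1" "A *v e = (e \<bullet> (A *v e)) *\<^sub>R e"
      using symmetric_eigenvector_in_invariant_subspace[OF sym V] by blast
    then have "e \<notin> F" by (auto simp: V_def dot_square_norm)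
    have "orthonormal_eigenvectors A (insert e F)"
      using F e unfolding orthonormal_eigenvectors_def V_def pairwise_insert orthogonal_def
      by (auto simp: inner_commute)
    from maximal[OF this] show False
      using \<open>e \<notin> F\<close> F by (simp add: orthonormal_eigenvectors_def)
  qed
  moreover have "x - (\<Sum>f\<in>F. (f \<bullet> x) *\<^sub>R f) \<in> V" for x
    unfolding V_def using orthonormal_eigenvectors_coeff[OF F] by (simp add: inner_diff_right)
  ultimately show thesis using that F by auto
qed

lemma psd_sqrt_eigenvector:
  fixes R :: "real^'n^'n"
  assumes "psd R" and RR: "R *v (R *v f) = \<mu> *\<^sub>R f" and "0 \<le> \<mu>"
  shows "R *v f = sqrt \<mu> *\<^sub>R f"
proof -
  have R_sym: "transpose R = R" and R_pos: "\<And>v. 0 \<le> v \<bullet> (R *v v)"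
    using assms(1) by (auto simp: psd_def)
  show ?thesis
  proof (cases "\<mu> = 0")
    case True
    have "(R *v f) \<bullet> (R *v f) = f \<bullet> (R *v (R *v f))"
      by (rule inner_matrix_vector_symmetric[OF R_sym, symmetric])
    then show ?thesis using RR True by simp
  next
    case False
    define \<sigma> where "\<sigma> = sqrt \<mu>"
    have "\<sigma> > 0" "\<sigma> * \<sigma> = \<mu>" using False \<open>0 \<le> \<mu>\<close> by (auto simp: \<sigma>_def)
    define w where "w = R *v f - \<sigma> *\<^sub>R f"
    have "R *v w = (- \<sigma>) *\<^sub>R w"
      using \<open>\<sigma> * \<sigma> = \<mu>\<close> by (simp add: w_def RR matrix_vector_mult_diff_distrib
          matrix_vector_mult_scaleR algebra_simps)
    then have "\<sigma> * (w \<bullet> w) \<le> 0" using R_pos[of w] by simp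
    then have "w \<bullet> w = 0" using \<open>\<sigma> > 0\<close> inner_ge_zero[of w] by (simp add: mult_le_0_iff)
    then show ?thesis by (simp add: w_def \<sigma>_def)
  qed
qed

lemma matrix_eq_on_basis_expansion:
  fixes M N :: "real^'n^'n"
  assumes expansion: "\<And>x. x = (\<Sum>f\<in>F. (f \<bullet> x) *\<^sub>R f)" and eq: "\<And>f. f \<in> F \<Longrightarrow> M *v f = N *v f"
  shows "M = N"
  unfolding matrix_eq
proof
  fix x
  have expand: "L *v x = (\<Sum>f\<in>F. (f \<bullet> x) *\<^sub>R (L *v f))" for L :: "real^'n^'n"
    by (subst expansion[of x]) (simp add: matrix_vector_mult_sum_right matrix_vector_mult_scaleR)
  show "M *v x = N *v x" unfolding expand using eq by simp
qed

lemma psd_sqrt_exists_unique: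
  fixes A :: "real^'n^'n"
  assumes "psd A"
  shows "\<exists>!S. psd S \<and> S ** S = A"
proof -
  have A_sym: "transpose A = A" and A_pos: "\<And>v. 0 \<le> v \<bullet> (A *v v)"
    using assms by (auto simp: psd_def)
  obtain F where F: "orthonormal_eigenvectors A F" and expansion: "\<And>x. x = (\<Sum>f\<in>F. (f \<bullet> x) *\<^sub>R f)"
    using symmetric_orthonormal_eigenbasis[OF A_sym] by blast
  define \<mu> where "\<mu> f = f \<bullet> (A *v f)" for f
  have eig: "A *v f = \<mu> f *\<^sub>R f" if "f \<in> F" for f
    using F that by (simp add: orthonormal_eigenvectors_def \<mu>_def)
  have \<mu>_nonneg: "0 \<le> \<mu> f" for f by (simp add: \<mu>_def A_pos)
  define S where "S = (\<Sum>f\<in>F. sqrt (\<mu> f) *\<^sub>R outer f)"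
  have S_mult: "S *v v = (\<Sum>f\<in>F. (sqrt (\<mu> f) * (f \<bullet> v)) *\<^sub>R f)" for v
    by (simp add: S_def matrix_vector_mult_sum_left scaleR_matrix_vector_assoc outer_matrix_vector_mult)
  have S_eig: "S *v f = sqrt (\<mu> f) *\<^sub>R f" if "f \<in> F" for f
  proof -
    have "g \<bullet> (S *v f) = g \<bullet> (sqrt (\<mu> f) *\<^sub>R f)" if "g \<in> F" for g
      using orthonormal_eigenvectors_coeff[OF F that] orthonormal_eigenvectors_inner[OF F that \<open>f \<in> F\<close>]
      by (simp add: S_mult inner_commute)
    then show ?thesis using expansion by (metis (no_types, lifting) sum.cong)
  qed
  have "psd S"
  proof -
    have "transpose S = S" by (simp add: S_def transpose_sum transpose_scalar transpose_outer)
    moreover have "v \<bullet> (S *v v) = (\<Sum>f\<in>F. sqrt (\<mu> f) * (f \<bullet> v)^2)" for v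
      by (simp add: S_mult inner_sum_right power2_eq_square inner_commute mult.assoc)
    then have "0 \<le> v \<bullet> (S *v v)" for v by (simp add: sum_nonneg \<mu>_nonneg)
    ultimately show ?thesis by (simp add: psd_def)
  qed
  moreover have "S ** S = A"
    using expansion by (rule matrix_eq_on_basis_expansion)
      (simp add: matrix_vector_mul_assoc[symmetric] S_eig eig matrix_vector_mult_scaleR \<mu>_nonneg)
  moreover have "R = S" if "psd R" "R ** R = A" for R
    using expansion
  proof (rule matrix_eq_on_basis_expansion)
    fix f assume "f \<in> F"
    then have "R *v (R *v f) = \<mu> f *\<^sub>R f" using \<open>R ** R = A\<close> eig by (simp add: matrix_vector_mul_assoc)
    then show "R *v f = S *v f" using psd_sqrt_eigenvector[OF \<open>psd R\<close> _ \<mu>_nonneg] S_eig \<open>f \<in> F\<close> by simp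
  qed
  ultimately show ?thesis by blast
qed

lemma psd_msqrt:
  assumes "psd A"
  shows "psd (msqrt A)" "msqrt A ** msqrt A = A"
  using theI'[OF psd_sqrt_exists_unique[OF assms]] by (simp_all add: msqrt_def)

lemma frob_inv_outer_inv_msqrt:
  fixes X :: "real^'n^'n"
  assumes "psd X" "invertible X"
  shows "frob (matrix_inv X) (outer (matrix_inv (msqrt X) *v w)) = norm (matrix_inv X *v w)^2"
proof -
  define S P Q where "S = msqrt X" and "P = matrix_inv X" and "Q = matrix_inv S"
  have SS: "S ** S = X" and S_sym: "transpose S = S"
    using psd_msqrt[OF assms(1)] by (auto simp: S_def psd_def)
  have XP: "X ** P = mat 1" using assms(2) by (simp add: P_def matrix_inv_right)
  have "S ** (S ** P) = mat 1" using XP SS by (simp add: matrix_mul_assoc)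
  then have SQ: "S ** Q = mat 1"
    unfolding Q_def by (meson invertible_right_inverse matrix_inv_right)
  have "X ** (Q ** Q) = S ** ((S ** Q) ** Q)" by (simp add: SS[symmetric] matrix_mul_assoc)
  then have PQQ: "P = Q ** Q" unfolding P_def using SQ by (simp add: matrix_inv_unique)
  have Q_sym: "transpose Q = Q" by (rule symmetric_right_inverse[OF S_sym SQ])
  have P_sym: "transpose P = P" using assms(1) XP by (auto simp: psd_def intro: symmetric_right_inverse)
  have "frob P (outer (Q *v w)) = (Q *v w) \<bullet> (P *v (Q *v w))" by (rule frob_outer)
  also have "\<dots> = w \<bullet> (Q *v (P *v (Q *v w)))" by (rule inner_matrix_vector_symmetric[OF Q_sym, symmetric])
  also have "\<dots> = w \<bullet> (P *v (P *v w))" by (simp add: matrix_vector_mul_assoc PQQ matrix_mul_assoc)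
  also have "\<dots> = norm (P *v w)^2"
    by (simp add: inner_matrix_vector_symmetric[OF P_sym] power2_norm_eq_inner)
  finally show ?thesis by (simp add: P_def Q_def S_def)
qed

lemma design_add: "design (y + z) u = design y u + design z u"
  by (simp add: design_def scaleR_add_left sum.distrib)

lemma design_scaleR: "design (a *\<^sub>R y) u = a *\<^sub>R design y u"
  by (simp add: design_def scaleR_sum_right)

lemma design_axis: "design (axis i 1) u = outer (u i)"
  by (simp add: design_def axis_def if_distrib[of "\<lambda>a. a *\<^sub>R _"] cong: if_cong)

lemma psd_design:
  assumes "\<forall>k. 0 \<le> y$k"
  shows "psd (design y u)"
proof -
  have "transpose (design y u) = design y u"
    by (simp add: design_def transpose_sum transpose_scalar transpose_outer)
  moreover have "v \<bullet> (design y u *v v) = (\<Sum>k\<in>UNIV. y$k * (u k \<bullet> v)^2)" for v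
    by (simp add: design_def matrix_vector_mult_sum_left scaleR_matrix_vector_assoc
        outer_matrix_vector_mult inner_sum_right power2_eq_square inner_commute mult.assoc)
  ultimately show ?thesis using assms by (simp add: psd_def sum_nonneg)
qed

lemma sherman_morrison:
  fixes A P :: "real^'n^'n"
  assumes AP: "A ** P = mat 1" and P_sym: "transpose P = P"
    and "\<beta> \<noteq> 0" and nz: "\<beta> + \<delta> * (w \<bullet> (P *v w)) \<noteq> 0"
  shows "(\<beta> *\<^sub>R A + \<delta> *\<^sub>R outer w) **
           (inverse \<beta> *\<^sub>R (P - (\<delta> / (\<beta> + \<delta> * (w \<bullet> (P *v w)))) *\<^sub>R outer (P *v w))) = mat 1"
    (is "?B ** ?M = _")
proof -
  define h c where "h = w \<bullet> (P *v w)" and "c = \<delta> / (\<beta> + \<delta> * h)"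
  have c: "\<delta> - c * \<beta> - \<delta> * c * h = 0" using nz by (simp add: c_def h_def field_simps)
  have "?B *v (?M *v z) = z" for z
  proof -
    define a where "a = (P *v w) \<bullet> z"
    have wPz: "w \<bullet> (P *v z) = a" using inner_matrix_vector_symmetric[OF P_sym] by (simp add: a_def)
    have APz: "A *v (P *v z) = z" for z using AP by (simp add: matrix_vector_mul_assoc)
    have "?B *v (?M *v z) =
        inverse \<beta> *\<^sub>R (\<beta> *\<^sub>R (z - (c * a) *\<^sub>R w) + (\<delta> * (a - c * a * h)) *\<^sub>R w)"
      by (simp add: c_def[symmetric] h_def[symmetric] a_def[symmetric] scaleR_matrix_vector_assoc
          matrix_vector_mult_add_rdistrib matrix_vector_mult_diff_rdistrib matrix_vector_mult_diff_distrib
          outer_matrix_vector_mult matrix_vector_mult_scaleR APz inner_diff_right wPz algebra_simps)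
    also have "\<dots> = z + (inverse \<beta> * a * (\<delta> - c * \<beta> - \<delta> * c * h)) *\<^sub>R w"
      using \<open>\<beta> \<noteq> 0\<close> by (simp add: algebra_simps)
    finally show ?thesis by (simp add: c)
  qed
  then show ?thesis by (simp add: matrix_eq matrix_vector_mul_assoc[symmetric])
qed

lemma trace_inverse_rank_one_update:
  fixes A P :: "real^'n^'n"
  assumes AP: "A ** P = mat 1" and P_sym: "transpose P = P"
    and "\<beta> \<noteq> 0" and nz: "\<beta> + \<delta> * (w \<bullet> (P *v w)) \<noteq> 0"
  shows "invertible (\<beta> *\<^sub>R A + \<delta> *\<^sub>R outer w)"
    and "trace (matrix_inv (\<beta> *\<^sub>R A + \<delta> *\<^sub>R outer w)) =
           (trace P - \<delta> / (\<beta> + \<delta> * (w \<bullet> (P *v w))) * norm (P *v w)^2) / \<beta>"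
proof -
  note inverse = sherman_morrison[OF AP P_sym \<open>\<beta> \<noteq> 0\<close> nz]
  then show "invertible (\<beta> *\<^sub>R A + \<delta> *\<^sub>R outer w)" using invertible_right_inverse by blast
  show "trace (matrix_inv (\<beta> *\<^sub>R A + \<delta> *\<^sub>R outer w)) =
      (trace P - \<delta> / (\<beta> + \<delta> * (w \<bullet> (P *v w))) * norm (P *v w)^2) / \<beta>"
    by (simp add: matrix_inv_unique[OF inverse] trace_scaleR trace_sub trace_outer
        power2_norm_eq_inner divide_inverse)
qed

lemma feasible_shift_towards_coordinate:
  assumes feas: "feasible m c b x" and budget: "\<forall>j<m. D * infnorm (c j) \<le> b j"
    and t: "0 \<le> t" "t \<le> 1" and D: "0 \<le> D" and room: "t * D \<le> 1 - x$i"
  shows "feasible m c b ((1 - t) *\<^sub>R x + (t * D) *\<^sub>R axis i 1)"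
    (is "feasible m c b ?y")
proof -
  have x01: "0 \<le> x$k" "x$k \<le> 1" for k using feas by (auto simp: feasible_def)
  have "c j \<bullet> ?y \<le> b j" if "j < m" for j
  proof -
    have "c j \<bullet> ?y = (1 - t) * (c j \<bullet> x) + (t * D) * c j $ i"
      by (simp add: inner_add_right inner_axis)
    also have "\<dots> \<le> (1 - t) * b j + (t * D) * infnorm (c j)"
      using feas that t D order.trans[OF abs_ge_self component_le_infnorm_cart, of "c j" i]
      by (intro add_mono mult_left_mono) (auto simp: feasible_def)
    also have "\<dots> \<le> (1 - t) * b j + t * b j"
      using budget that t by (simp add: mult.assoc mult_left_mono)
    finally show ?thesis by (simp add: algebra_simps)
  qed
  moreover have "0 \<le> ?y$k \<and> ?y$k \<le> 1" for k
  proof -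
    have "?y$k = (1 - t) * x$k + (if k = i then t * D else 0)" by (simp add: axis_def)
    moreover have "0 \<le> (1 - t) * x$k" "(1 - t) * x$k \<le> x$k" "0 \<le> t * D"
      using x01[of k] t D by (simp_all add: mult_left_le_one_le)
    ultimately show ?thesis using x01[of k] room by auto
  qed
  ultimately show ?thesis by (simp add: feasible_def)
qed

text \<open>Compare x with the feasible points (1 - t) x + t D e_i, whose design is
  (1 - t) X + t D u_i u_i^T; the bound is the first-order optimality condition as t tends to 0.\<close>
lemma optimal_gradient_bound:
  fixes u :: "'n::finite \<Rightarrow> real^'d::finite"
  assumes opt: "optimal u m c b x" and D: "0 \<le> D" and budget: "\<forall>j<m. D * infnorm (c j) \<le> b j"
    and "x$i < 1"
  shows "D * norm (matrix_inv (design x u) *v u i)^2 \<le> trace (matrix_inv (design x u))"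
proof -
  define X P w where "X = design x u" and "P = matrix_inv X" and "w = u i"
  define T g h where "T = trace P" and "g = norm (P *v w)^2" and "h = w \<bullet> (P *v w)"
  have feas: "feasible m c b x" and "invertible X"
    and min: "\<And>y. feasible m c b y \<Longrightarrow> invertible (design y u) \<Longrightarrow> T \<le> trace (matrix_inv (design y u))"
    using opt by (auto simp: optimal_def X_def P_def T_def)
  have "psd X" using feas by (simp add: X_def feasible_def psd_design)
  have XP: "X ** P = mat 1" using \<open>invertible X\<close> by (simp add: P_def matrix_inv_right)
  have "psd P" by (rule psd_right_inverse[OF \<open>psd X\<close> XP])
  then have P_sym: "transpose P = P" and "0 \<le> h" by (auto simp: psd_def h_def)
  have t\<^sub>0: "0 < (1 - x$i) / (D + 2)" using \<open>x$i < 1\<close> D by simp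
  have "D * g \<le> T + t * (D * h * T - T)" if t: "0 < t" "t \<le> (1 - x$i) / (D + 2)" for t
  proof -
    have "x$i \<ge> 0" using feas by (simp add: feasible_def)
    moreover have "t * (D + 2) \<le> 1 - x$i" using t D by (simp add: le_divide_eq)
    moreover have "0 \<le> t * D" using t D by simp
    ultimately have "t < 1" "t * D \<le> 1 - x$i" using \<open>0 < t\<close> by (auto simp: algebra_simps)
    define \<delta> where "\<delta> = t * D"
    define y where "y = (1 - t) *\<^sub>R x + \<delta> *\<^sub>R axis i 1"
    have y_feas: "feasible m c b y" unfolding y_def \<delta>_def
      using feasible_shift_towards_coordinate[OF feas budget] t \<open>t < 1\<close> D \<open>t * D \<le> 1 - x$i\<close> by simp
    have y_design: "design y u = (1 - t) *\<^sub>R X + \<delta> *\<^sub>R outer w"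
      by (simp add: y_def X_def w_def design_add design_scaleR design_axis)
    have "0 \<le> \<delta> * h" using \<open>0 \<le> h\<close> t D by (simp add: \<delta>_def)
    then have pos: "0 < 1 - t + \<delta> * h" using \<open>t < 1\<close> by linarith
    have "1 - t \<noteq> 0" "1 - t + \<delta> * (w \<bullet> (P *v w)) \<noteq> 0" using \<open>t < 1\<close> pos by (simp_all add: h_def)
    note update = trace_inverse_rank_one_update[OF XP P_sym this]
    have "T \<le> trace (matrix_inv (design y u))" using min[OF y_feas] update(1) by (simp add: y_design)
    also have "\<dots> = (T - \<delta> / (1 - t + \<delta> * h) * g) / (1 - t)"
      using update(2) by (simp add: y_design T_def g_def h_def)
    finally have "T * (1 - t) \<le> T - \<delta> / (1 - t + \<delta> * h) * g"
      using \<open>t < 1\<close> by (simp add: pos_le_divide_eq)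
    moreover have "T * (1 - t) = T - t * T" by (simp add: algebra_simps)
    moreover have "\<delta> / (1 - t + \<delta> * h) * g = \<delta> * g / (1 - t + \<delta> * h)" by simp
    ultimately have "\<delta> * g / (1 - t + \<delta> * h) \<le> t * T" by linarith
    then have "\<delta> * g \<le> t * T * (1 - t + \<delta> * h)" using pos by (simp add: pos_divide_le_eq)
    then have "t * (D * g) \<le> t * (T + t * (D * h * T - T))"
      by (simp add: \<delta>_def algebra_simps)
    then show ?thesis using \<open>0 < t\<close> by simp
  qed
  then have "D * g \<le> T" by (rule le_of_le_add_linear_near_zero[OF t\<^sub>0])
  then show ?thesis by (simp add: g_def T_def P_def X_def w_def)
qed

theorem lemma4p16:
  fixes u :: "'n::finite \<Rightarrow> real^'d::finite"
    and m :: nat and c :: "nat \<Rightarrow> real^'n" and b :: "nat \<Rightarrow> real"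
    and \<epsilon> :: real and x :: "real^'n" and i :: 'n
  assumes c_nonneg: "\<forall>j<m. \<forall>k. 0 \<le> c j $ k"
    and eps: "\<epsilon> > 0"
    and budget: "\<forall>j<m. b j \<ge> real CARD('d) * infnorm (c j) / \<epsilon>"
    and opt: "optimal u m c b x"
    and frac: "0 < x$i" "x$i < 1"
  shows "let X = design x u; v = matrix_inv (msqrt X) *v u i in
         frob (matrix_inv X) (outer v) \<le> \<epsilon> / real CARD('d) * trace (matrix_inv X)"
proof -
  define X d where "X = design x u" and "d = real CARD('d)"
  have "psd X" "invertible X"
    using opt by (auto simp: optimal_def feasible_def X_def psd_design)
  have "d / \<epsilon> * norm (matrix_inv X *v u i)^2 \<le> trace (matrix_inv X)"
    using optimal_gradient_bound[OF opt _ _ frac(2), of "d / \<epsilon>"] budget eps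
    by (simp add: X_def d_def mult.commute)
  then have "norm (matrix_inv X *v u i)^2 \<le> \<epsilon> / d * trace (matrix_inv X)"
    using eps by (simp add: d_def field_simps)
  then show ?thesis
    by (simp add: Let_def X_def[symmetric] d_def frob_inv_outer_inv_msqrt[OF \<open>psd X\<close> \<open>invertible X\<close>])
qed

end
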